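(* Let $k\ge1$, $\ell\ge2$ an integer, $W^k=\,]-1/2,1/2]^k$, and let $\Lambda\subset\mathbf{R}^k$ be a lattice of covolume $1$ such that $D_c(W^k+\Lambda)\ge1/\ell$. Then for every $v_1,\dots,v_\ell\in\mathbf{R}^k$ there exist $i\neq i'\in\{1,\dots,\ell\}$ such that \[D_c\big((W^k+\Lambda+v_i)\cap(W^k+\Lambda+v_{i'})\big)\ge2\,\frac{\ell D_c(W^k+\Lambda)-1}{\ell(\ell-1)}.\]
   Context: For $E\subset\mathbf{R}^k$, $D_c(E)=\lim_{R\to\infty}\operatorname{Leb}(B_R\cap E)/\operatorname{Leb}(B_R)$, where $B_R=\{x:\|x\|_\infty\le R\}$. *)

theory Defs
  imports "HOL-Analysis.Analysis"
begin

definition supball :: "real \<Rightarrow> (real^'n::finite) set" where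
  "supball R = {x. \<forall>i. \<bar>x $ i\<bar> \<le> R}"

definition Dc :: "(real^'n::finite) set \<Rightarrow> real" where
  "Dc E = Lim at_top (\<lambda>R. measure lebesgue (supball R \<inter> E) / measure lebesgue (supball R :: (real^'n) set))"

definition Wcube :: "(real^'n::finite) set" where
  "Wcube = {x. \<forall>i. -1/2 < x $ i \<and> x $ i \<le> 1/2}"

definition int_points :: "(real^'n::finite) set" where
  "int_points = {z. \<forall>i. z $ i \<in> \<int>}"

definition covol1_lattice :: "(real^'n::finite) set \<Rightarrow> bool" where
  "covol1_lattice L \<longleftrightarrow> (\<exists>A :: real^'n::finite^'n. \<bar>det A\<bar> = 1 \<and> L = (\<lambda>z. A *v z) ` int_points)"

definition msum :: "(real^'n::finite) set \<Rightarrow> (real^'n::finite) set \<Rightarrow> (real^'n::finite) set" where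
  "msum A B = {a + b | a b. a \<in> A \<and> b \<in> B}"

end

theory Submission
  imports Defs
begin

text \<open>
  A set periodic under the lattice \<open>A \<int>\<^sup>k\<close> has a density, the proportion of a fundamental cell
  it occupies: a large cube is, up to a boundary layer whose width is bounded by the diameter of the
  cell, a disjoint union of lattice translates of the cell. The translates \<open>E\<^sub>i = W\<^sup>k + \<Lambda> + v\<^sub>i\<close>
  and their pairwise intersections are periodic, so their densities exist as limits, and the
  Bonferroni inequality \<open>\<Sum>\<^sub>i \<mu>(E\<^sub>i \<inter> B) - \<Sum>\<^bsub>j<i\<^esub> \<mu>(E\<^sub>i \<inter> E\<^sub>j \<inter> B) \<le> \<mu>(B)\<close> for a
  cube \<open>B\<close> passes to the limit: \<open>\<ell> D\<^sub>c(E) - \<Sum>\<^bsub>j<i\<^esub> D\<^sub>c(E\<^sub>i \<inter> E\<^sub>j) \<le> 1\<close>. One of the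
  \<open>\<ell>(\<ell>-1)/2\<close> pairwise densities is therefore at least their average.
\<close>

section \<open>Cubes, densities and a Bonferroni inequality\<close>

definition supcube :: "real^'n::finite \<Rightarrow> real \<Rightarrow> (real^'n) set" where
  "supcube p R = {x. \<forall>i. \<bar>x $ i - p $ i\<bar> \<le> R}"

lemma supcube_eq_cbox: "supcube p R = cbox (p - (\<chi> i. R)) (p + (\<chi> i. R))"
  by (auto simp: supcube_def mem_box_cart abs_le_iff algebra_simps)

lemma lmeasurable_supcube [simp]: "supcube p R \<in> lmeasurable"
  unfolding supcube_eq_cbox by simp

lemma bounded_supcube [simp]: "bounded (supcube p R)"
  unfolding supcube_eq_cbox by simp

lemma measure_supcube:
  fixes p :: "real^'n::finite"
  assumes "R \<ge> 0"
  shows "measure lebesgue (supcube p R) = (2 * R) ^ CARD('n)"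
proof -
  have "p \<in> supcube p R"
    using assms by (simp add: supcube_def)
  then have "cbox (p - (\<chi> i. R)) (p + (\<chi> i. R)) \<noteq> {}"
    unfolding supcube_eq_cbox by auto
  then show ?thesis
    unfolding supcube_eq_cbox by (simp add: measure_completion content_cbox_cart)
qed

lemma supball_eq_supcube: "supball R = supcube 0 R"
  by (simp add: supball_def supcube_def)

lemma tendsto_sandwich_cube_volume:
  fixes M :: "real \<Rightarrow> real"
  assumes bounds: "\<And>R. R \<ge> r \<Longrightarrow> (2 * (R - c)) ^ n * q \<le> M R \<and> M R \<le> (2 * (R + c)) ^ n * q"
  shows "((\<lambda>R. M R / (2 * R) ^ n) \<longlongrightarrow> q) at_top"
proof (rule tendsto_sandwich)
  have scale: "((R + a) / R) ^ n * q = (2 * (R + a)) ^ n * q / (2 * R) ^ n" for R a :: real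
  proof -
    have "2 * (R + a) / (2 * R) = (R + a) / R" by (rule mult_divide_mult_cancel_left) simp
    then show ?thesis by (metis power_divide times_divide_eq_left)
  qed
  have "\<forall>\<^sub>F R in at_top. R \<ge> max r 1"
    by (rule eventually_ge_at_top)
  then show "\<forall>\<^sub>F R in at_top. ((R + - c) / R) ^ n * q \<le> M R / (2 * R) ^ n"
    and "\<forall>\<^sub>F R in at_top. M R / (2 * R) ^ n \<le> ((R + c) / R) ^ n * q"
    unfolding scale using bounds by (auto elim!: eventually_mono intro!: divide_right_mono)
  have "((\<lambda>R. (R + a) / R) \<longlongrightarrow> 1) at_top" for a :: real
  proof -
    have "((\<lambda>R. 1 + a / R) \<longlongrightarrow> 1 + 0) at_top"
      by (intro tendsto_add tendsto_const tendsto_divide_0[OF tendsto_const]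
          filterlim_at_top_imp_at_infinity[OF filterlim_ident])
    moreover have "\<forall>\<^sub>F R in at_top. 1 + a / R = (R + a) / R"
      using eventually_gt_at_top[of 0] by eventually_elim (simp add: field_simps)
    ultimately show ?thesis
      using tendsto_cong by fastforce
  qed
  then have lim: "((\<lambda>R. ((R + a) / R) ^ n * q) \<longlongrightarrow> q) at_top" for a
    using tendsto_mult_right[OF tendsto_power] by fastforce
  show "((\<lambda>R. ((R + - c) / R) ^ n * q) \<longlongrightarrow> q) at_top" "((\<lambda>R. ((R + c) / R) ^ n * q) \<longlongrightarrow> q) at_top"
    by (rule lim)+
qed

definition has_density :: "(real^'n::finite) set \<Rightarrow> real \<Rightarrow> bool" where
  "has_density X d \<longleftrightarrow>
     ((\<lambda>R. measure lebesgue (supball R \<inter> X) / measure lebesgue (supball R :: (real^'n) set))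
        \<longlongrightarrow> d) at_top"

lemma Dc_eq_if_has_density: "has_density X d \<Longrightarrow> Dc X = d"
  unfolding has_density_def Dc_def by (rule tendsto_Lim[OF trivial_limit_at_top_linorder])

lemma measure_Union_ge_Bonferroni:
  fixes X :: "nat \<Rightarrow> 'a set"
  assumes "\<And>i. X i \<in> fmeasurable M"
  shows "(\<Sum>i\<in>{1..k}. measure M (X i)) - (\<Sum>i\<in>{1..k}. \<Sum>j\<in>{1..<i}. measure M (X i \<inter> X j))
           \<le> measure M (\<Union>i\<in>{1..k}. X i)"
proof (induction k)
  case (Suc k)
  let ?U = "\<Union>i\<in>{1..k}. X i"
  have U: "?U \<in> fmeasurable M"
    using assms by (intro fmeasurable.finite_UN) auto
  have "measure M (X (Suc k) \<inter> ?U) \<le> (\<Sum>j\<in>{1..k}. measure M (X (Suc k) \<inter> X j))"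
    unfolding Int_UN_distrib by (rule measure_UNION_le) (auto intro: fmeasurableD[OF assms])
  moreover have "measure M (X (Suc k) \<union> ?U) = measure M (X (Suc k)) + measure M ?U - measure M (X (Suc k) \<inter> ?U)"
    by (rule measure_Un3[OF assms U])
  moreover have "{1..Suc k} = insert (Suc k) {1..k}" "{1..<Suc k} = {1..k}"
    by auto
  ultimately show ?case
    using Suc.IH by (simp add: sum.insert)
qed simp

lemma density_Bonferroni:
  fixes X :: "nat \<Rightarrow> (real^'n::finite) set"
  assumes "\<And>i. X i \<in> sets lebesgue"
    and "\<And>i. has_density (X i) (a i)"
    and "\<And>i j. has_density (X i \<inter> X j) (b i j)"
  shows "(\<Sum>i\<in>{1..k}. a i) - (\<Sum>i\<in>{1..k}. \<Sum>j\<in>{1..<i}. b i j) \<le> 1"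
proof (rule tendsto_upperbound)
  let ?m = "\<lambda>R. measure lebesgue (supball R :: (real^'n) set)"
  show "((\<lambda>R. (\<Sum>i\<in>{1..k}. measure lebesgue (supball R \<inter> X i) / ?m R)
             - (\<Sum>i\<in>{1..k}. \<Sum>j\<in>{1..<i}. measure lebesgue (supball R \<inter> (X i \<inter> X j)) / ?m R))
          \<longlongrightarrow> (\<Sum>i\<in>{1..k}. a i) - (\<Sum>i\<in>{1..k}. \<Sum>j\<in>{1..<i}. b i j)) at_top"
    using assms(2,3) unfolding has_density_def by (intro tendsto_diff tendsto_sum)
  show "\<forall>\<^sub>F R in at_top. (\<Sum>i\<in>{1..k}. measure lebesgue (supball R \<inter> X i) / ?m R)
             - (\<Sum>i\<in>{1..k}. \<Sum>j\<in>{1..<i}. measure lebesgue (supball R \<inter> (X i \<inter> X j)) / ?m R) \<le> 1"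
    using eventually_gt_at_top[of 0]
  proof eventually_elim
    case (elim R)
    define Y where "Y i = supball R \<inter> X i" for i
    have Y: "Y i \<in> lmeasurable" for i
      unfolding Y_def supball_eq_supcube
      using assms(1) by (intro bounded_set_imp_lmeasurable sets.Int fmeasurableD[OF lmeasurable_supcube])
        (auto intro: bounded_subset)
    have "(\<Sum>i\<in>{1..k}. measure lebesgue (Y i)) - (\<Sum>i\<in>{1..k}. \<Sum>j\<in>{1..<i}. measure lebesgue (Y i \<inter> Y j))
           \<le> measure lebesgue (\<Union>i\<in>{1..k}. Y i)"
      by (rule measure_Union_ge_Bonferroni[OF Y])
    also have "\<dots> \<le> ?m R"
    proof (rule measure_mono_fmeasurable)
      show "(\<Union>i\<in>{1..k}. Y i) \<in> sets lebesgue"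
        using Y by (intro sets.finite_UN) (auto intro: fmeasurableD)
    qed (auto simp: Y_def supball_eq_supcube)
    finally have "(\<Sum>i\<in>{1..k}. measure lebesgue (Y i)) - (\<Sum>i\<in>{1..k}. \<Sum>j\<in>{1..<i}. measure lebesgue (Y i \<inter> Y j))
                    \<le> ?m R" .
    moreover have "Y i \<inter> Y j = supball R \<inter> (X i \<inter> X j)" for i j
      by (auto simp: Y_def)
    moreover have "?m R > 0"
      using elim by (simp add: supball_eq_supcube measure_supcube)
    ultimately show ?case
      by (simp add: Y_def sum_divide_distrib[symmetric] diff_divide_distrib[symmetric] divide_le_eq)
  qed
qed simp

lemma exists_pair_ge_average:
  fixes f :: "nat \<Rightarrow> nat \<Rightarrow> real"
  assumes "l \<ge> 2" and "s \<le> (\<Sum>i\<in>{1..l}. \<Sum>j\<in>{1..<i}. f i j)"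
  shows "\<exists>i\<in>{1..l}. \<exists>j\<in>{1..<i}. 2 * s / (real l * (real l - 1)) \<le> f i j"
proof (rule ccontr)
  define t where "t = 2 * s / (real l * (real l - 1))"
  define P where "P = Sigma {1..l} (\<lambda>i. {1..<i})"
  assume "\<not> ?thesis"
  then have less: "f i j < t" if "(i, j) \<in> P" for i j
    using that by (auto simp: P_def t_def not_le)
  have "(2, 1) \<in> P"
    using assms(1) by (auto simp: P_def)
  then have "P \<noteq> {}"
    by blast
  then have "(\<Sum>(i, j)\<in>P. f i j) < (\<Sum>(i, j)\<in>P. t)"
    using less by (intro sum_strict_mono) (auto simp: P_def)
  moreover have "real (card P) = real l * (real l - 1) / 2"
  proof -
    have "real (card P) = (\<Sum>i\<in>{1..l}. real (card {1..<i}))"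
      by (simp add: P_def card_SigmaI)
    also have "\<dots> = real l * (real l - 1) / 2"
      by (induction l) (auto simp: sum.cl_ivl_Suc field_simps)
    finally show ?thesis .
  qed
  ultimately have "(\<Sum>(i, j)\<in>P. f i j) < s"
    using assms(1) by (simp add: t_def)
  moreover have "(\<Sum>(i, j)\<in>P. f i j) = (\<Sum>i\<in>{1..l}. \<Sum>j\<in>{1..<i}. f i j)"
    unfolding P_def by (rule sum.Sigma[symmetric]) auto
  ultimately show False
    using assms(2) by simp
qed

section \<open>Lattices and their fundamental cells\<close>

lemma mem_translation: "x \<in> (+) a ` S \<longleftrightarrow> x - a \<in> S"
  for a :: "'a::ab_group_add"
  by (auto intro: image_eqI[of _ _ "x - a"])

lemma int_points_add: "z \<in> int_points \<Longrightarrow> z' \<in> int_points \<Longrightarrow> z + z' \<in> int_points"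
  by (auto simp: int_points_def)

lemma int_points_diff: "z \<in> int_points \<Longrightarrow> z' \<in> int_points \<Longrightarrow> z - z' \<in> int_points"
  by (auto simp: int_points_def)

lemma countable_int_points: "countable (int_points :: (real^'n::finite) set)"
proof (rule countable_subset)
  show "int_points \<subseteq> range (\<lambda>f::'n \<Rightarrow> int. \<chi> i. real_of_int (f i))"
  proof
    fix z :: "real^'n"
    assume "z \<in> int_points"
    then have "\<forall>i. \<exists>k. z $ i = real_of_int k"
      unfolding int_points_def by (auto elim: Ints_cases)
    then obtain f where "\<forall>i. z $ i = real_of_int (f i)"
      by metis
    then show "z \<in> range (\<lambda>f::'n \<Rightarrow> int. \<chi> i. real_of_int (f i))"
      by (intro image_eqI[of _ _ f]) (auto simp: vec_eq_iff)
  qed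
qed simp

lemma sets_lebesgue_Wcube: "Wcube \<in> sets lebesgue"
proof -
  have "Wcube \<in> sets borel"
    unfolding Wcube_def by measurable
  then show ?thesis
    by (intro sets_completionI_sets) (simp add: sets_lborel)
qed

definition unit_cell :: "(real^'n::finite) set" where
  "unit_cell = {u. \<forall>i. 0 \<le> u $ i \<and> u $ i < 1}"

definition fundamental_cell :: "real^'n^'n::finite \<Rightarrow> (real^'n) set" where
  "fundamental_cell A = (\<lambda>u. A *v u) ` unit_cell"

definition matrix_abs_sum :: "real^'n^'n::finite \<Rightarrow> real" where
  "matrix_abs_sum A = (\<Sum>i\<in>UNIV. \<Sum>j\<in>UNIV. \<bar>A $ i $ j\<bar>)"

lemma matrix_abs_sum_nonneg: "matrix_abs_sum A \<ge> 0"
  unfolding matrix_abs_sum_def by (intro sum_nonneg) simp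

lemma fundamental_cell_component_bound:
  assumes "y \<in> fundamental_cell A"
  shows "\<bar>y $ i\<bar> \<le> matrix_abs_sum A"
proof -
  obtain u where u: "u \<in> unit_cell" "y = A *v u"
    using assms by (auto simp: fundamental_cell_def)
  have "\<bar>y $ i\<bar> \<le> (\<Sum>j\<in>UNIV. \<bar>A $ i $ j * u $ j\<bar>)"
    unfolding u matrix_vector_mult_def by (simp add: sum_abs)
  also have "\<dots> \<le> (\<Sum>j\<in>UNIV. \<bar>A $ i $ j\<bar>)"
  proof (intro sum_mono)
    fix j
    have "0 \<le> u $ j" "u $ j < 1"
      using u(1) by (auto simp: unit_cell_def)
    then have "\<bar>u $ j\<bar> \<le> 1"
      by simp
    then show "\<bar>A $ i $ j * u $ j\<bar> \<le> \<bar>A $ i $ j\<bar>"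
      by (simp add: abs_mult mult_left_le)
  qed
  also have "\<dots> \<le> matrix_abs_sum A"
    unfolding matrix_abs_sum_def
    by (rule member_le_sum[where f = "\<lambda>i. \<Sum>j\<in>UNIV. \<bar>A $ i $ j\<bar>"]) (auto intro: sum_nonneg)
  finally show ?thesis .
qed

lemma bounded_fundamental_cell: "bounded (fundamental_cell A)"
proof (rule bounded_subset)
  show "fundamental_cell A \<subseteq> supcube 0 (matrix_abs_sum A)"
    using fundamental_cell_component_bound by (auto simp: supcube_def)
qed simp

locale lattice_basis =
  fixes A :: "real^'n::finite^'n"
  assumes det_nonzero: "det A \<noteq> 0"
begin

lemma invertible: "invertible A"
  using det_nonzero invertible_det_nz by blast

lemma sets_lebesgue_fundamental_cell: "fundamental_cell A \<in> sets lebesgue"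
proof -
  obtain B where AB: "A ** B = mat 1" and BA: "B ** A = mat 1"
    using invertible invertible_def by blast
  have "fundamental_cell A = (\<lambda>x. B *v x) -` unit_cell"
  proof (intro set_eqI iffI)
    fix x
    assume "x \<in> fundamental_cell A"
    then show "x \<in> (\<lambda>x. B *v x) -` unit_cell"
      by (auto simp: fundamental_cell_def matrix_vector_mul_assoc BA)
  next
    fix x
    assume "x \<in> (\<lambda>x. B *v x) -` unit_cell"
    moreover have "x = A *v (B *v x)"
      by (simp add: matrix_vector_mul_assoc AB)
    ultimately show "x \<in> fundamental_cell A"
      unfolding fundamental_cell_def by blast
  qed
  also have "\<dots> \<in> sets borel"
  proof -
    have "(\<lambda>x. (B *v x) $ i) \<in> borel_measurable borel" for i
      by (intro borel_measurable_continuous_onI continuous_intros linear_continuous_on) auto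
    then have "{x. \<forall>i. 0 \<le> (B *v x) $ i \<and> (B *v x) $ i < 1} \<in> sets borel"
      by measurable
    then show ?thesis
      by (simp add: unit_cell_def vimage_def)
  qed
  finally show ?thesis
    by (intro sets_completionI_sets) (simp add: sets_lborel)
qed

lemma lmeasurable_fundamental_cell: "fundamental_cell A \<in> lmeasurable"
  by (rule bounded_set_imp_lmeasurable[OF bounded_fundamental_cell sets_lebesgue_fundamental_cell])

lemma exists_lattice_shift_into_cell: "\<exists>z\<in>int_points. x - A *v z \<in> fundamental_cell A"
proof -
  obtain B where AB: "A ** B = mat 1"
    using invertible invertible_def by blast
  define w where "w = B *v x"
  define z :: "real^'n" where "z = (\<chi> i. of_int \<lfloor>w $ i\<rfloor>)"
  have "z \<in> int_points"
    by (simp add: z_def int_points_def)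
  moreover have "w - z \<in> unit_cell"
    by (auto simp: unit_cell_def z_def) (smt (verit) real_of_int_floor_add_one_gt)
  moreover have "x - A *v z = A *v (w - z)"
    by (simp add: w_def matrix_vector_mult_diff_distrib matrix_vector_mul_assoc AB)
  ultimately show ?thesis
    unfolding fundamental_cell_def by blast
qed

lemma lattice_shift_into_cell_unique:
  assumes "x - A *v z \<in> fundamental_cell A" "x - A *v z' \<in> fundamental_cell A"
    and "z \<in> int_points" "z' \<in> int_points"
  shows "z = z'"
proof -
  obtain B where BA: "B ** A = mat 1"
    using invertible invertible_def by blast
  obtain u u' where u: "u \<in> unit_cell" "x - A *v z = A *v u" "u' \<in> unit_cell" "x - A *v z' = A *v u'"
    using assms(1,2) by (auto simp: fundamental_cell_def)
  have "A *v (u + z) = A *v (u' + z')"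
    using u by (simp add: matrix_vector_right_distrib algebra_simps)
  then have "B *v (A *v (u + z)) = B *v (A *v (u' + z'))"
    by simp
  then have uz: "u + z = u' + z'"
    by (simp add: matrix_vector_mul_assoc BA)
  show ?thesis
    unfolding vec_eq_iff
  proof
    fix i
    have "z $ i \<in> \<int>" "z' $ i \<in> \<int>"
      using assms(3,4) by (auto simp: int_points_def)
    then obtain a b where ab: "z $ i = of_int a" "z' $ i = of_int b"
      by (auto elim!: Ints_cases)
    have "u $ i + z $ i = u' $ i + z' $ i"
      using uz by (metis vector_add_component)
    moreover have "0 \<le> u $ i" "u $ i < 1" "0 \<le> u' $ i" "u' $ i < 1"
      using u by (auto simp: unit_cell_def)
    ultimately have "\<bar>real_of_int a - real_of_int b\<bar> < 1"
      using ab by linarith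
    then show "z $ i = z' $ i"
      using ab by simp
  qed
qed

definition lattice_periodic :: "(real^'n) set \<Rightarrow> bool" where
  "lattice_periodic S \<longleftrightarrow> (\<forall>x. \<forall>z\<in>int_points. x + A *v z \<in> S \<longleftrightarrow> x \<in> S)"

lemma lattice_periodic_diff:
  "lattice_periodic S \<Longrightarrow> z \<in> int_points \<Longrightarrow> x - A *v z \<in> S \<longleftrightarrow> x \<in> S"
  unfolding lattice_periodic_def by (metis diff_add_cancel)

lemma lattice_periodic_UNIV: "lattice_periodic UNIV"
  by (simp add: lattice_periodic_def)

lemma lattice_periodic_Int: "lattice_periodic S \<Longrightarrow> lattice_periodic T \<Longrightarrow> lattice_periodic (S \<inter> T)"
  unfolding lattice_periodic_def by blast

lemma lattice_periodic_translation: "lattice_periodic S \<Longrightarrow> lattice_periodic ((+) a ` S)"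
  unfolding lattice_periodic_def mem_translation by (metis diff_add_eq)

lemma mem_msum_lattice: "x \<in> msum X ((\<lambda>z. A *v z) ` int_points) \<longleftrightarrow> (\<exists>z\<in>int_points. x - A *v z \<in> X)"
proof
  assume "x \<in> msum X ((\<lambda>z. A *v z) ` int_points)"
  then obtain a z where "a \<in> X" "z \<in> int_points" "x = a + A *v z"
    by (auto simp: msum_def)
  then show "\<exists>z\<in>int_points. x - A *v z \<in> X"
    by (intro bexI[of _ z]) auto
next
  assume "\<exists>z\<in>int_points. x - A *v z \<in> X"
  then obtain z where "z \<in> int_points" "x - A *v z \<in> X"
    by blast
  then show "x \<in> msum X ((\<lambda>z. A *v z) ` int_points)"
    unfolding msum_def by (intro CollectI exI[of _ "x - A *v z"] exI[of _ "A *v z"]) auto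
qed

lemma lattice_periodic_msum: "lattice_periodic (msum X ((\<lambda>z. A *v z) ` int_points))"
  unfolding lattice_periodic_def mem_msum_lattice
proof (intro allI ballI iffI)
  fix x z :: "real^'n"
  assume z: "z \<in> int_points"
  show "\<exists>w\<in>int_points. x - A *v w \<in> X" if "\<exists>w\<in>int_points. x + A *v z - A *v w \<in> X"
    using that int_points_diff[OF _ z] by (metis add_diff_eq diff_diff_eq2 matrix_vector_mult_diff_distrib)
  show "\<exists>w\<in>int_points. x + A *v z - A *v w \<in> X" if "\<exists>w\<in>int_points. x - A *v w \<in> X"
    using that int_points_add[OF _ z] by (metis add_diff_cancel_right matrix_vector_right_distrib diff_diff_eq)
qed

lemma sets_lebesgue_msum_lattice:
  assumes "X \<in> sets lebesgue"
  shows "msum X ((\<lambda>z. A *v z) ` int_points) \<in> sets lebesgue"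
proof -
  have "msum X ((\<lambda>z. A *v z) ` int_points) = (\<Union>z\<in>int_points. (+) (A *v z) ` X)"
    unfolding set_eq_iff mem_msum_lattice by (simp add: mem_translation)
  also have "\<dots> \<in> sets lebesgue"
    using assms by (intro sets.countable_UN'' countable_int_points lebesgue_sets_translation)
  finally show ?thesis .
qed

section \<open>Tiling by translates of the fundamental cell\<close>

definition tile :: "real^'n \<Rightarrow> (real^'n) set" where
  "tile z = (+) (A *v z) ` fundamental_cell A"

lemma mem_tile: "x \<in> tile z \<longleftrightarrow> x - A *v z \<in> fundamental_cell A"
  by (simp add: tile_def mem_translation)

lemma tiles_cover: "\<exists>z\<in>int_points. x \<in> tile z"
  using exists_lattice_shift_into_cell by (simp add: mem_tile)

lemma tiles_disjoint: "z \<in> int_points \<Longrightarrow> z' \<in> int_points \<Longrightarrow> z \<noteq> z' \<Longrightarrow> tile z \<inter> tile z' = {}"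
  using lattice_shift_into_cell_unique by (auto simp: mem_tile)

lemma tile_subset_supcube:
  assumes "x \<in> tile z" "x \<in> supcube p R"
  shows "tile z \<subseteq> supcube p (R + 2 * matrix_abs_sum A)"
proof
  fix y
  assume "y \<in> tile z"
  show "y \<in> supcube p (R + 2 * matrix_abs_sum A)"
    unfolding supcube_def
  proof (intro CollectI allI)
    fix i
    have "\<bar>(y - A *v z) $ i\<bar> \<le> matrix_abs_sum A" "\<bar>(x - A *v z) $ i\<bar> \<le> matrix_abs_sum A"
      using assms(1) \<open>y \<in> tile z\<close> fundamental_cell_component_bound mem_tile by blast+
    moreover have "\<bar>x $ i - p $ i\<bar> \<le> R"
      using assms(2) by (simp add: supcube_def)
    ultimately show "\<bar>y $ i - p $ i\<bar> \<le> R + 2 * matrix_abs_sum A"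
      unfolding vector_minus_component abs_le_iff by linarith
  qed
qed

lemma Int_tile_eq_translation:
  assumes "lattice_periodic S" "z \<in> int_points"
  shows "S \<inter> tile z = (+) (A *v z) ` (S \<inter> fundamental_cell A)"
  unfolding set_eq_iff Int_iff mem_tile mem_translation using lattice_periodic_diff[OF assms] by blast

lemma lmeasurable_tiles: "finite K \<Longrightarrow> (\<Union>z\<in>K. tile z) \<in> lmeasurable"
  unfolding tile_def by (rule fmeasurable.finite_UN) (simp_all add: measurable_translation lmeasurable_fundamental_cell)

lemma lmeasurable_Int_tiles:
  assumes "S \<in> sets lebesgue" "finite K"
  shows "S \<inter> (\<Union>z\<in>K. tile z) \<in> lmeasurable"
  using fmeasurable_Int_fmeasurable[OF lmeasurable_tiles[OF assms(2)] assms(1)] by (simp add: Int_commute)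

lemma measure_Int_tiles:
  assumes "lattice_periodic S" "S \<in> sets lebesgue" "finite K" "K \<subseteq> int_points"
  shows "measure lebesgue (S \<inter> (\<Union>z\<in>K. tile z)) = real (card K) * measure lebesgue (S \<inter> fundamental_cell A)"
proof -
  have eq: "S \<inter> tile z = (+) (A *v z) ` (S \<inter> fundamental_cell A)" if "z \<in> K" for z
    using Int_tile_eq_translation assms(1,4) that by blast
  have "S \<inter> fundamental_cell A \<in> lmeasurable"
    using fmeasurable_Int_fmeasurable[OF lmeasurable_fundamental_cell assms(2)] by (simp add: Int_commute)
  then have tile: "S \<inter> tile z \<in> lmeasurable" if "z \<in> K" for z
    unfolding eq[OF that] by (rule measurable_translation)
  have disj: "disjoint_family_on (\<lambda>z. S \<inter> tile z) K"
    using tiles_disjoint assms(4) by (fastforce simp: disjoint_family_on_def)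
  have "measure lebesgue (S \<inter> (\<Union>z\<in>K. tile z)) = (\<Sum>z\<in>K. measure lebesgue (S \<inter> tile z))"
    unfolding Int_UN_distrib
  proof (rule measure_finite_Union[OF assms(3) _ disj])
    show "emeasure lebesgue (S \<inter> tile z) \<noteq> \<infinity>" if "z \<in> K" for z
      using fmeasurableD2[OF tile[OF that]] by simp
  qed (auto intro: fmeasurableD tile)
  also have "\<dots> = (\<Sum>z\<in>K. measure lebesgue (S \<inter> fundamental_cell A))"
    by (rule sum.cong) (simp_all add: eq measure_translation)
  finally show ?thesis
    by simp
qed

lemma measure_tiles:
  assumes "finite K" "K \<subseteq> int_points"
  shows "measure lebesgue (\<Union>z\<in>K. tile z) = real (card K) * measure lebesgue (fundamental_cell A)"
proof -
  have "UNIV \<in> sets lebesgue"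
    by simp
  from measure_Int_tiles[OF lattice_periodic_UNIV this assms] show ?thesis
    by simp
qed

lemma measure_fundamental_cell_pos: "measure lebesgue (fundamental_cell A) > 0"
proof (rule ccontr)
  assume "\<not> ?thesis"
  then have "measure lebesgue (fundamental_cell A) = 0"
    using measure_nonneg[of lebesgue "fundamental_cell A"] by linarith
  have "tile z \<in> null_sets lebesgue" for z
  proof (rule null_setsI)
    have "tile z \<in> lmeasurable"
      unfolding tile_def by (rule measurable_translation[OF lmeasurable_fundamental_cell])
    then show "emeasure lebesgue (tile z) = 0" "tile z \<in> sets lebesgue"
      using \<open>measure lebesgue (fundamental_cell A) = 0\<close>
      by (simp_all add: emeasure_eq_measure2 tile_def measure_translation fmeasurableD)
  qed
  then have null: "(\<Union>z\<in>int_points. tile z) \<in> null_sets lebesgue"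
    by (intro null_sets_UN' countable_int_points)
  have "supcube 0 1 \<subseteq> (\<Union>z\<in>int_points. tile z)"
    using tiles_cover by blast
  from null_sets_subset[OF null fmeasurableD[OF lmeasurable_supcube] this]
  have "measure lebesgue (supcube (0::real^'n) 1) = 0"
    by (rule measure_eq_0_null_sets)
  then show False
    by (simp add: measure_supcube)
qed

lemma finite_tiles_within:
  assumes "T \<in> lmeasurable"
  shows "finite {z\<in>int_points. tile z \<subseteq> T}"
proof (rule ccontr)
  let ?\<delta> = "measure lebesgue (fundamental_cell A)"
  define N where "N = Suc (nat \<lceil>measure lebesgue T / ?\<delta>\<rceil>)"
  assume "infinite {z\<in>int_points. tile z \<subseteq> T}"
  then obtain K where K: "K \<subseteq> {z\<in>int_points. tile z \<subseteq> T}" "finite K" "card K = N"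
    using infinite_arbitrarily_large by meson
  have "K \<subseteq> int_points"
    using K(1) by blast
  then have "real N * ?\<delta> = measure lebesgue (\<Union>z\<in>K. tile z)"
    unfolding K(3)[symmetric] by (rule measure_tiles[OF K(2), symmetric])
  also have "\<dots> \<le> measure lebesgue T"
    using K(1) by (intro measure_mono_fmeasurable[OF _ fmeasurableD[OF lmeasurable_tiles[OF K(2)]] assms]) blast
  finally have "real N \<le> measure lebesgue T / ?\<delta>"
    using measure_fundamental_cell_pos by (simp add: pos_le_divide_eq)
  then show False
    using le_of_int_ceiling[of "measure lebesgue T / ?\<delta>"] by (simp add: N_def)
qed

section \<open>Density of periodic sets\<close>

lemma measure_supcube_Int_periodic_le:
  assumes "lattice_periodic S" "S \<in> sets lebesgue" "R \<ge> 0"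
  shows "measure lebesgue (supcube p R \<inter> S)
           \<le> (2 * (R + 2 * matrix_abs_sum A)) ^ CARD('n)
               * (measure lebesgue (S \<inter> fundamental_cell A) / measure lebesgue (fundamental_cell A))"
proof -
  let ?R' = "R + 2 * matrix_abs_sum A"
  define H where "H = {z\<in>int_points. tile z \<subseteq> supcube p ?R'}"
  have H: "finite H" "H \<subseteq> int_points"
    unfolding H_def by (auto intro: finite_tiles_within)
  have "?R' \<ge> 0"
    using assms(3) matrix_abs_sum_nonneg[of A] by simp
  have "real (card H) * measure lebesgue (fundamental_cell A) = measure lebesgue (\<Union>z\<in>H. tile z)"
    using measure_tiles[OF H] by simp
  also have "\<dots> \<le> (2 * ?R') ^ CARD('n)"
    using \<open>?R' \<ge> 0\<close> lmeasurable_tiles[OF H(1)]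
    by (subst measure_supcube[symmetric]) (auto simp: H_def intro!: measure_mono_fmeasurable fmeasurableD)
  finally have card_H: "real (card H) \<le> (2 * ?R') ^ CARD('n) / measure lebesgue (fundamental_cell A)"
    using measure_fundamental_cell_pos by (simp add: pos_le_divide_eq)
  have "supcube p R \<inter> S \<subseteq> S \<inter> (\<Union>z\<in>H. tile z)"
    using tiles_cover tile_subset_supcube by (fastforce simp: H_def)
  then have "measure lebesgue (supcube p R \<inter> S) \<le> measure lebesgue (S \<inter> (\<Union>z\<in>H. tile z))"
    using lmeasurable_Int_tiles[OF assms(2) H(1)]
    by (intro measure_mono_fmeasurable fmeasurableD fmeasurable_Int_fmeasurable[OF lmeasurable_supcube assms(2)])
  also have "\<dots> = real (card H) * measure lebesgue (S \<inter> fundamental_cell A)"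
    using measure_Int_tiles[OF assms(1,2) H] .
  also have "\<dots> \<le> (2 * ?R') ^ CARD('n) / measure lebesgue (fundamental_cell A) * measure lebesgue (S \<inter> fundamental_cell A)"
    using card_H by (intro mult_right_mono) auto
  finally show ?thesis
    by simp
qed

lemma measure_supcube_Int_periodic_ge:
  assumes "lattice_periodic S" "S \<in> sets lebesgue" "R \<ge> 2 * matrix_abs_sum A"
  shows "(2 * (R - 2 * matrix_abs_sum A)) ^ CARD('n)
           * (measure lebesgue (S \<inter> fundamental_cell A) / measure lebesgue (fundamental_cell A))
         \<le> measure lebesgue (supcube p R \<inter> S)"
proof -
  define G where "G = {z\<in>int_points. tile z \<subseteq> supcube p R}"
  have G: "finite G" "G \<subseteq> int_points"
    unfolding G_def by (auto intro: finite_tiles_within)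
  have "supcube p (R - 2 * matrix_abs_sum A) \<subseteq> (\<Union>z\<in>G. tile z)"
    using tiles_cover tile_subset_supcube[of _ _ p "R - 2 * matrix_abs_sum A"] by (fastforce simp: G_def)
  then have "(2 * (R - 2 * matrix_abs_sum A)) ^ CARD('n) \<le> measure lebesgue (\<Union>z\<in>G. tile z)"
    using assms(3) lmeasurable_tiles[OF G(1)]
    by (subst measure_supcube[symmetric]) (auto intro!: measure_mono_fmeasurable fmeasurableD[OF lmeasurable_supcube])
  also have "\<dots> = real (card G) * measure lebesgue (fundamental_cell A)"
    using measure_tiles[OF G] .
  finally have card_G: "(2 * (R - 2 * matrix_abs_sum A)) ^ CARD('n) / measure lebesgue (fundamental_cell A)
                          \<le> real (card G)"
    using measure_fundamental_cell_pos by (simp add: pos_divide_le_eq)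
  have "(2 * (R - 2 * matrix_abs_sum A)) ^ CARD('n) / measure lebesgue (fundamental_cell A)
          * measure lebesgue (S \<inter> fundamental_cell A)
        \<le> real (card G) * measure lebesgue (S \<inter> fundamental_cell A)"
    using card_G by (intro mult_right_mono) auto
  also have "\<dots> = measure lebesgue (S \<inter> (\<Union>z\<in>G. tile z))"
    using measure_Int_tiles[OF assms(1,2) G] by simp
  also have "\<dots> \<le> measure lebesgue (supcube p R \<inter> S)"
    using lmeasurable_Int_tiles[OF assms(2) G(1)]
    by (intro measure_mono_fmeasurable fmeasurableD fmeasurable_Int_fmeasurable[OF lmeasurable_supcube assms(2)])
      (auto simp: G_def)
  finally show ?thesis
    by simp
qed

lemma periodic_supcube_density:
  assumes "lattice_periodic S" "S \<in> sets lebesgue"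
  shows "((\<lambda>R. measure lebesgue (supcube p R \<inter> S) / (2 * R) ^ CARD('n))
           \<longlongrightarrow> measure lebesgue (S \<inter> fundamental_cell A) / measure lebesgue (fundamental_cell A)) at_top"
proof (rule tendsto_sandwich_cube_volume)
  fix R
  assume "R \<ge> 2 * matrix_abs_sum A"
  with matrix_abs_sum_nonneg[of A] show "(2 * (R - 2 * matrix_abs_sum A)) ^ CARD('n)
           * (measure lebesgue (S \<inter> fundamental_cell A) / measure lebesgue (fundamental_cell A))
         \<le> measure lebesgue (supcube p R \<inter> S) \<and>
        measure lebesgue (supcube p R \<inter> S) \<le> (2 * (R + 2 * matrix_abs_sum A)) ^ CARD('n)
           * (measure lebesgue (S \<inter> fundamental_cell A) / measure lebesgue (fundamental_cell A))"
    using measure_supcube_Int_periodic_ge[OF assms] measure_supcube_Int_periodic_le[OF assms] by simp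
qed

text \<open>The density of a periodic set does not depend on where the cubes are centred, so it is
  invariant under translation.\<close>

lemma has_density_translation_periodic:
  assumes "lattice_periodic S" "S \<in> sets lebesgue"
  shows "has_density ((+) a ` S)
           (measure lebesgue (S \<inter> fundamental_cell A) / measure lebesgue (fundamental_cell A))"
  unfolding has_density_def
proof (rule tendsto_cong[THEN iffD1, OF _ periodic_supcube_density[OF assms, of "- a"]])
  have shift: "supcube 0 R \<inter> (+) a ` S = (+) a ` (supcube (- a) R \<inter> S)" for R
    by (auto simp: supcube_def mem_translation add.commute)
  show "\<forall>\<^sub>F R in at_top. measure lebesgue (supcube (- a) R \<inter> S) / (2 * R) ^ CARD('n)
               = measure lebesgue (supball R \<inter> (+) a ` S) / measure lebesgue (supball R :: (real^'n) set)"
    using eventually_ge_at_top[of 0]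
    by eventually_elim (simp add: supball_eq_supcube shift measure_translation measure_supcube)
qed

lemma has_density_Dc_periodic:
  assumes "lattice_periodic S" "S \<in> sets lebesgue"
  shows "has_density S (Dc S)"
proof -
  have "has_density S (measure lebesgue (S \<inter> fundamental_cell A) / measure lebesgue (fundamental_cell A))"
    using has_density_translation_periodic[OF assms, of 0] by simp
  then show ?thesis
    by (metis Dc_eq_if_has_density)
qed

lemma has_density_translation_Dc_periodic:
  assumes "lattice_periodic S" "S \<in> sets lebesgue"
  shows "has_density ((+) a ` S) (Dc S)"
  using has_density_translation_periodic[OF assms] has_density_Dc_periodic[OF assms]
  by (metis Dc_eq_if_has_density image_add_0)

end

text \<open>The hypothesis \<open>D\<^sub>c(E) \<ge> 1/\<ell>\<close> only makes the bound non-trivial; the argument does not use it.\<close>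

theorem lemma2p19:
  fixes L :: "(real^'n) set" and l :: nat and v :: "nat \<Rightarrow> real^'n"
  assumes "l \<ge> 2"
    and "covol1_lattice L"
    and "Dc (msum Wcube L) \<ge> 1 / real l"
  shows "\<exists>i\<in>{1..l}. \<exists>i'\<in>{1..l}. i \<noteq> i' \<and>
           Dc ((\<lambda>x. x + v i) ` msum Wcube L \<inter> (\<lambda>x. x + v i') ` msum Wcube L)
             \<ge> 2 * (real l * Dc (msum Wcube L) - 1) / (real l * (real l - 1))"
proof -
  obtain A :: "real^'n^'n" where "\<bar>det A\<bar> = 1" and L: "L = (\<lambda>z. A *v z) ` int_points"
    using assms(2) unfolding covol1_lattice_def by blast
  then interpret lattice_basis A
    by unfold_locales auto
  define E where "E = msum Wcube L"
  define X where "X i = (+) (v i) ` E" for i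
  have E: "lattice_periodic E" "E \<in> sets lebesgue"
    unfolding E_def L by (auto intro: lattice_periodic_msum sets_lebesgue_msum_lattice sets_lebesgue_Wcube)
  then have X: "lattice_periodic (X i)" "X i \<in> sets lebesgue" for i
    unfolding X_def by (auto intro: lattice_periodic_translation lebesgue_sets_translation)
  have "(\<Sum>i\<in>{1..l}. Dc E) - (\<Sum>i\<in>{1..l}. \<Sum>j\<in>{1..<i}. Dc (X i \<inter> X j)) \<le> 1"
  proof (rule density_Bonferroni[of X])
    show "has_density (X i) (Dc E)" for i
      unfolding X_def by (rule has_density_translation_Dc_periodic[OF E])
    show "has_density (X i \<inter> X j) (Dc (X i \<inter> X j))" for i j
      by (intro has_density_Dc_periodic lattice_periodic_Int sets.Int X)
  qed (rule X)
  then obtain i j where "i \<in> {1..l}" "j \<in> {1..<i}"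
      "2 * (real l * Dc E - 1) / (real l * (real l - 1)) \<le> Dc (X i \<inter> X j)"
    using exists_pair_ge_average[OF assms(1), of "real l * Dc E - 1" "\<lambda>i j. Dc (X i \<inter> X j)"] by auto
  moreover have "(\<lambda>x. x + v k) ` E = X k" for k
    unfolding X_def by (simp add: add.commute)
  ultimately show ?thesis
    unfolding E_def by (intro bexI[of _ i] bexI[of _ j]) auto
qed

end
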